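(* For integers $r,k\ge0$ and real $\alpha$ with $\alpha>k>r$, $$\sum_{n=1}^\infty\frac{H_{n+\alpha}^2+H_{n+\alpha}^{(2)}}{(n+r)(n+k)}=\frac{k-\alpha}{k-r}\left\{\frac{H_{\alpha-k}^3+3H_{\alpha-k}H_{\alpha-k}^{(2)}+2H_{\alpha-k}^{(3)}}{\alpha-k}-\sum_{j=1}^k\frac{H_{\alpha+j-k}^2+H_{\alpha+j-k}^{(2)}}{j(\alpha+j-k)}\right\}$$ $$+\frac{\alpha-r}{k-r}\left\{\frac{H_{\alpha-r}^3+3H_{\alpha-r}H_{\alpha-r}^{(2)}+2H_{\alpha-r}^{(3)}}{\alpha-r}-\sum_{j=1}^r\frac{H_{\alpha+j-r}^2+H_{\alpha+j-r}^{(2)}}{j(\alpha+j-r)}\right\}.$$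
   Context: Shifted harmonic numbers: for a real $\alpha$ that is not a negative integer, $H_\alpha := \sum_{k=1}^\infty\left(\frac1k-\frac1{k+\alpha}\right)$ and, for integers $m\ge 2$, $H_\alpha^{(m)} := \sum_{k=1}^\infty\left(\frac1{k^m}-\frac1{(k+\alpha)^m}\right)=\zeta(m)-\zeta(m,\alpha+1)$, where $\zeta$ is the Riemann zeta function and $\zeta(s,\alpha+1)=\sum_{n=1}^\infty (n+\alpha)^{-s}$ is the Hurwitz zeta function. Powers such as $H_\alpha^2$ mean $(H_\alpha)^2$. Empty sums are $0$. *)

theory Defs
  imports Complex_Main
begin

definition shifted_harm :: "nat \<Rightarrow> real \<Rightarrow> real" where
  "shifted_harm m \<alpha> = (\<Sum>k. 1 / (real (Suc k)) ^ m - 1 / (real (Suc k) + \<alpha>) ^ m)"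

abbreviation H :: "real \<Rightarrow> real" where
  "H \<alpha> \<equiv> shifted_harm 1 \<alpha>"

end

theory Submission
  imports Defs "HOL-Analysis.Analysis" "HOL-Real_Asymp.Real_Asymp"
begin

text \<open>Put H2 = H^2 + H^(2) and H3 = H^3 + 3 H H^(2) + 2 H^(3). From H_(y+1) = H_y + 1/(y+1) one gets
  H2 (y + 1) = H2 y + 2 H_(y+1) / (y + 1) and H3 (y + 1) = H3 y + 3 H2 (y + 1) / (y + 1).
  A function that is monotone on [0, \<infinity>), vanishes at 0 and satisfies such a difference equation
  with increments tending to 0 is unique. This identifies
  \<Sum>m H_(y+m+1) y / ((m+1)(y+m+1)) with H2 y, and then \<Sum>m (H2 (x+m+1) - H2 (m+1)) / (m+1)
  with 2/3 H3 x. After splitting 1/((n+r)(n+k)) into partial fractions, each part is a shifted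
  tail of the second series up to a telescoping correction, and the finite sums over j are
  evaluated by the recursion for H3.\<close>

lemma one_div_diff_one_div_add:
  fixes M d :: real
  assumes "M \<noteq> 0" "M + d \<noteq> 0" shows "1 / M - 1 / (M + d) = d / (M * (M + d))"
  using assms by (simp add: field_simps)

lemma partial_fraction_pair:
  fixes a b h :: real
  assumes "0 < a" "a < b" shows "(h / a - h / b) / (b - a) = h / (a * b)"
  using assms by (simp add: field_simps)

lemma sums_diff_shift:
  fixes u :: "nat \<Rightarrow> 'a::real_normed_vector"
  assumes "u \<longlonglongrightarrow> 0"
  shows "(\<lambda>n. u n - u (n + s)) sums (\<Sum>i<s. u i)"
proof (induction s)
  case (Suc s)
  have "(\<lambda>n. u (n + s) - u (Suc n + s)) sums (u (0 + s) - 0)"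
    by (rule telescope_sums') (rule LIMSEQ_ignore_initial_segment[OF assms])
  from sums_add[OF Suc this] show ?case by (simp add: algebra_simps)
qed simp

text \<open>Uniqueness in the style of Bohr and Mollerup: A - B is 1-periodic and vanishes on the
  naturals, while monotonicity traps A and B between consecutive integer values whose gap g n
  tends to 0.\<close>

lemma mono_difference_equation_unique:
  fixes A B g :: "real \<Rightarrow> real"
  assumes mono_A: "\<And>y z. 0 \<le> y \<Longrightarrow> y \<le> z \<Longrightarrow> A y \<le> A z"
    and mono_B: "\<And>y z. 0 \<le> y \<Longrightarrow> y \<le> z \<Longrightarrow> B y \<le> B z"
    and step_A: "\<And>y. 0 \<le> y \<Longrightarrow> A (y + 1) = A y + g (y + 1)"
    and step_B: "\<And>y. 0 \<le> y \<Longrightarrow> B (y + 1) = B y + g (y + 1)"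
    and "A 0 = B 0" and g: "(\<lambda>n. g (real n)) \<longlonglongrightarrow> 0" and y: "0 \<le> y"
  shows "A y = B y"
proof -
  have periodic: "A (y + real n) - B (y + real n) = A y - B y" for n
  proof (induction n)
    case (Suc n)
    then show ?case using step_A[of "y + real n"] step_B[of "y + real n"] y by (simp add: add_ac)
  qed simp
  have at_nat: "A (real n) = B (real n)" for n
  proof (induction n)
    case (Suc n)
    then show ?case using step_A[of "real n"] step_B[of "real n"] by (simp add: add_ac)
  qed (simp add: \<open>A 0 = B 0\<close>)
  define j where "j = nat \<lfloor>y\<rfloor>"
  have j: "real j \<le> y" "y \<le> real j + 1" using y unfolding j_def by linarith+
  have "\<bar>A y - B y\<bar> \<le> g (real (n + j + 1))" for n
  proof -
    have "A (real (n + j)) \<le> A (y + real n)" "A (y + real n) \<le> A (real (n + j + 1))"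
         "B (real (n + j)) \<le> B (y + real n)" "B (y + real n) \<le> B (real (n + j + 1))"
      using j y by (auto intro: mono_A mono_B)
    moreover have "A (real (n + j + 1)) = A (real (n + j)) + g (real (n + j + 1))"
      using step_A[of "real (n + j)"] by (simp add: add_ac)
    ultimately show ?thesis using periodic[of n] at_nat[of "n + j"] at_nat[of "n + j + 1"] by linarith
  qed
  moreover have "(\<lambda>n. g (real (n + j + 1))) \<longlonglongrightarrow> 0"
    using LIMSEQ_ignore_initial_segment[OF g, of "j + 1"] by (simp add: add.assoc)
  ultimately have "\<bar>A y - B y\<bar> \<le> 0" by (intro LIMSEQ_le_const) auto
  then show ?thesis by simp
qed

lemma sums_by_difference_equation:
  fixes t :: "real \<Rightarrow> nat \<Rightarrow> real" and F g :: "real \<Rightarrow> real"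
  assumes t_mono: "\<And>y z m. 0 \<le> y \<Longrightarrow> y \<le> z \<Longrightarrow> t y m \<le> t z m"
    and t_0: "t 0 = (\<lambda>_. 0)"
    and t_step: "\<And>y. 0 \<le> y \<Longrightarrow> (\<lambda>m. t (y + 1) m - t y m) sums g (y + 1)"
    and "\<And>y z. 0 \<le> y \<Longrightarrow> y \<le> z \<Longrightarrow> F y \<le> F z"
    and "\<And>y. 0 \<le> y \<Longrightarrow> F (y + 1) = F y + g (y + 1)"
    and "F 0 = 0" and "(\<lambda>n. g (real n)) \<longlonglongrightarrow> 0" and "0 \<le> y"
  shows "t y sums F y"
proof -
  have summable_nat: "summable (t (real n))" for n
  proof (induction n)
    case (Suc n)
    then have "summable (\<lambda>m. t (real n) m + (t (real n + 1) m - t (real n) m))"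
      using t_step[of "real n"] by (intro summable_add sums_summable) auto
    then show ?case by (simp add: add_ac)
  qed (simp add: t_0)
  have summable: "summable (t y)" if "0 \<le> y" for y
  proof -
    have "0 \<le> t y m" for m using t_mono[of 0 y m] t_0 that by simp
    moreover have "t y m \<le> t (real (nat \<lceil>y\<rceil>)) m" for m using that by (intro t_mono) linarith+
    ultimately show ?thesis
      by (intro summable_comparison_test'[OF summable_nat[of "nat \<lceil>y\<rceil>"]]) auto
  qed
  have "suminf (t y) = F y"
  proof (rule mono_difference_equation_unique[where A = "\<lambda>y. suminf (t y)" and g = g])
    show "suminf (t y) \<le> suminf (t z)" if "0 \<le> y" "y \<le> z" for y z
      using that by (intro suminf_le t_mono summable) auto
    show "suminf (t (y + 1)) = suminf (t y) + g (y + 1)" if "0 \<le> y" for y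
    proof -
      have "(\<lambda>m. t y m + (t (y + 1) m - t y m)) sums (suminf (t y) + g (y + 1))"
        using that by (intro sums_add summable_sums summable t_step)
      then show ?thesis by (simp add: sums_iff)
    qed
  qed (use assms in \<open>simp_all add: t_0\<close>)
  then show ?thesis using summable_sums[OF summable[OF \<open>0 \<le> y\<close>]] by simp
qed

lemma summable_inverse_Suc_squared: "summable (\<lambda>k. 1 / real (Suc k) ^ 2)"
proof -
  have "summable (\<lambda>n. inverse (real n ^ 2))" by (rule inverse_power_summable) simp
  then show ?thesis by (subst (asm) summable_Suc_iff[symmetric]) (simp add: inverse_eq_divide)
qed

lemma shifted_harm_term_mono:
  assumes "0 \<le> y" "y \<le> z"
  shows "1 / real (Suc k) ^ m - 1 / (real (Suc k) + y) ^ m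
         \<le> 1 / real (Suc k) ^ m - 1 / (real (Suc k) + z) ^ m"
proof -
  have "(real (Suc k) + y) ^ m \<le> (real (Suc k) + z) ^ m" using assms by (intro power_mono) auto
  moreover have "0 < (real (Suc k) + y) ^ m" using assms by simp
  ultimately show ?thesis by (simp add: frac_le)
qed

lemma shifted_harm_term_nonneg:
  "0 \<le> y \<Longrightarrow> 0 \<le> 1 / real (Suc k) ^ m - 1 / (real (Suc k) + y) ^ m"
  using shifted_harm_term_mono[of 0 y] by simp

lemma summable_shifted_harm:
  assumes "0 \<le> y" "1 \<le> m"
  shows "summable (\<lambda>k. 1 / real (Suc k) ^ m - 1 / (real (Suc k) + y) ^ m)"
proof (cases "m = 1")
  case True
  have "1 / real (Suc k) ^ m - 1 / (real (Suc k) + y) ^ m \<le> y * (1 / real (Suc k) ^ 2)" for k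
  proof -
    have "1 / real (Suc k) ^ m - 1 / (real (Suc k) + y) ^ m = y / (real (Suc k) * (real (Suc k) + y))"
      using True assms by (simp add: field_simps)
    also have "\<dots> \<le> y / (real (Suc k) * real (Suc k))"
      using assms by (intro divide_left_mono mult_mono) auto
    finally show ?thesis by (simp add: power2_eq_square)
  qed
  then show ?thesis
    by (intro summable_comparison_test'[OF summable_mult[OF summable_inverse_Suc_squared]])
       (use shifted_harm_term_nonneg[OF assms(1)] in \<open>simp del: of_nat_Suc\<close>)
next
  case False
  have "1 / real (Suc k) ^ m - 1 / (real (Suc k) + y) ^ m \<le> 1 / real (Suc k) ^ 2" for k
  proof -
    have "1 / real (Suc k) ^ m \<le> 1 / real (Suc k) ^ 2"
      using False assms by (intro divide_left_mono power_increasing) auto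
    moreover have "0 \<le> 1 / (real (Suc k) + y) ^ m" using assms by simp
    ultimately show ?thesis by linarith
  qed
  then show ?thesis
    by (intro summable_comparison_test'[OF summable_inverse_Suc_squared])
       (use shifted_harm_term_nonneg[OF assms(1)] in \<open>simp del: of_nat_Suc\<close>)
qed

lemma shifted_harm_sums:
  "0 \<le> y \<Longrightarrow> 1 \<le> m \<Longrightarrow>
     (\<lambda>k. 1 / real (Suc k) ^ m - 1 / (real (Suc k) + y) ^ m) sums shifted_harm m y"
  unfolding shifted_harm_def by (intro summable_sums summable_shifted_harm)

lemma shifted_harm_nonneg: "0 \<le> y \<Longrightarrow> 1 \<le> m \<Longrightarrow> 0 \<le> shifted_harm m y"
  unfolding shifted_harm_def by (intro suminf_nonneg summable_shifted_harm shifted_harm_term_nonneg)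

lemma shifted_harm_mono:
  "0 \<le> y \<Longrightarrow> y \<le> z \<Longrightarrow> 1 \<le> m \<Longrightarrow> shifted_harm m y \<le> shifted_harm m z"
  unfolding shifted_harm_def by (intro suminf_le summable_shifted_harm shifted_harm_term_mono) auto

lemma shifted_harm_0 [simp]: "shifted_harm m 0 = 0"
  unfolding shifted_harm_def by simp

lemma shifted_harm_2_le: "0 \<le> y \<Longrightarrow> shifted_harm 2 y \<le> (\<Sum>k. 1 / real (Suc k) ^ 2)"
  unfolding shifted_harm_def by (intro suminf_le summable_shifted_harm summable_inverse_Suc_squared) auto

lemma shifted_harm_plus_1:
  assumes "0 \<le> y" "1 \<le> m"
  shows "shifted_harm m (y + 1) = shifted_harm m y + 1 / (y + 1) ^ m"
proof -
  define c where "c k = 1 / (real k + 1 + y) ^ m" for k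
  have "c \<longlonglongrightarrow> 0" unfolding c_def using assms by real_asymp
  then have "(\<lambda>k. c k - c (Suc k)) sums (1 / (y + 1) ^ m)"
    using telescope_sums' by (fastforce simp: c_def add.commute)
  then have "(\<lambda>k. (1 / real (Suc k) ^ m - 1 / (real (Suc k) + y) ^ m) + (c k - c (Suc k)))
               sums (shifted_harm m y + 1 / (y + 1) ^ m)"
    by (intro sums_add shifted_harm_sums assms)
  moreover have "(\<lambda>k. 1 / real (Suc k) ^ m - 1 / (real (Suc k) + (y + 1)) ^ m) sums shifted_harm m (y + 1)"
    using assms by (intro shifted_harm_sums) auto
  ultimately show ?thesis by (simp add: c_def algebra_simps sums_iff)
qed

lemma H_of_nat [simp]: "H (real n) = harm n"
proof (induction n)
  case (Suc n)
  then show ?case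
    using shifted_harm_plus_1[of "real n" 1] by (simp add: harm_Suc inverse_eq_divide add.commute)
qed (simp add: harm_def)

lemma H_le_ln:
  assumes "0 \<le> y" shows "H y \<le> ln (y + 1) + 1"
proof -
  define n where "n = nat \<lceil>y\<rceil>"
  have n: "y \<le> real n" "real n < y + 1" using assms unfolding n_def by linarith+
  have "H y \<le> H (real n)" using assms n(1) by (intro shifted_harm_mono) auto
  also have "\<dots> = harm n" by (rule H_of_nat)
  also have "harm n \<le> ln (y + 1) + 1"
  proof (cases "n = 0")
    case True
    then show ?thesis using assms by (simp add: harm_def)
  next
    case False
    then have "harm n - ln (real n) \<le> harm 1 - ln (real 1)"
      by (intro euler_mascheroni_sequence_decreasing) auto
    moreover have "ln (real n) \<le> ln (y + 1)" using False n(2) by simp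
    ultimately show ?thesis by (simp add: harm_def)
  qed
  finally show ?thesis .
qed

lemma H_div_tendsto_0:
  assumes "0 \<le> y" shows "(\<lambda>n. H (y + real n) / (y + real n)) \<longlonglongrightarrow> 0"
proof (rule tendsto_sandwich[of "\<lambda>_. 0" _ _ "\<lambda>n. (ln (y + real n + 1) + 1) / (y + real n)"])
  show "\<forall>\<^sub>F n in sequentially. 0 \<le> H (y + real n) / (y + real n)"
    using assms by (intro always_eventually allI divide_nonneg_nonneg shifted_harm_nonneg) auto
  show "\<forall>\<^sub>F n in sequentially. H (y + real n) / (y + real n) \<le> (ln (y + real n + 1) + 1) / (y + real n)"
    using assms H_le_ln by (intro always_eventually allI divide_right_mono) auto
  show "(\<lambda>n. (ln (y + real n + 1) + 1) / (y + real n)) \<longlonglongrightarrow> 0"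
    by real_asymp
qed simp

text \<open>For natural n, H2 n and H3 n are 2! and 3! times the complete homogeneous symmetric
  polynomials of degree 2 and 3 in 1, 1/2, ..., 1/n.\<close>

definition H2 :: "real \<Rightarrow> real" where
  "H2 y = H y ^ 2 + shifted_harm 2 y"

definition H3 :: "real \<Rightarrow> real" where
  "H3 y = H y ^ 3 + 3 * H y * shifted_harm 2 y + 2 * shifted_harm 3 y"

lemma H2_0 [simp]: "H2 0 = 0" and H3_0 [simp]: "H3 0 = 0"
  by (simp_all add: H2_def H3_def)

lemma H2_plus_1:
  assumes "0 \<le> y" shows "H2 (y + 1) = H2 y + 2 * H (y + 1) / (y + 1)"
proof -
  define d where "d = 1 / (y + 1)"
  have "H (y + 1) = H y + d" "shifted_harm 2 (y + 1) = shifted_harm 2 y + d ^ 2"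
    using shifted_harm_plus_1[OF assms, of 1] shifted_harm_plus_1[OF assms, of 2]
    by (simp_all add: d_def power_one_over)
  moreover have "2 * H (y + 1) / (y + 1) = 2 * d * H (y + 1)" by (simp add: d_def)
  ultimately show ?thesis unfolding H2_def by (simp add: algebra_simps power2_eq_square)
qed

lemma H3_plus_1:
  assumes "0 \<le> y" shows "H3 (y + 1) = H3 y + 3 * H2 (y + 1) / (y + 1)"
proof -
  define d where "d = 1 / (y + 1)"
  have "H (y + 1) = H y + d" "shifted_harm 2 (y + 1) = shifted_harm 2 y + d ^ 2"
       "shifted_harm 3 (y + 1) = shifted_harm 3 y + d ^ 3"
    using shifted_harm_plus_1[OF assms, of 1] shifted_harm_plus_1[OF assms, of 2]
      shifted_harm_plus_1[OF assms, of 3]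
    by (simp_all add: d_def power_one_over)
  moreover have "3 * H2 (y + 1) / (y + 1) = 3 * d * H2 (y + 1)" by (simp add: d_def)
  ultimately show ?thesis
    unfolding H3_def H2_def by (simp add: algebra_simps power2_eq_square power3_eq_cube)
qed

lemma H2_mono: "0 \<le> y \<Longrightarrow> y \<le> z \<Longrightarrow> H2 y \<le> H2 z"
  unfolding H2_def using shifted_harm_mono[of y z 1] shifted_harm_mono[of y z 2] shifted_harm_nonneg[of y 1]
  by (intro add_mono power_mono) auto

lemma H3_mono:
  assumes "0 \<le> y" "y \<le> z" shows "H3 y \<le> H3 z"
proof -
  have "H y \<le> H z" "0 \<le> H y" "shifted_harm 2 y \<le> shifted_harm 2 z" "0 \<le> shifted_harm 2 y"
       "shifted_harm 3 y \<le> shifted_harm 3 z"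
    using assms by (auto intro: shifted_harm_mono shifted_harm_nonneg)
  then have "H y ^ 3 \<le> H z ^ 3" "H y * shifted_harm 2 y \<le> H z * shifted_harm 2 z"
    by (auto intro: power_mono mult_mono)
  with \<open>shifted_harm 3 y \<le> shifted_harm 3 z\<close> show ?thesis unfolding H3_def by linarith
qed

lemma H2_div_tendsto_0: "(\<lambda>n. H2 (real n) / real n) \<longlonglongrightarrow> 0"
proof -
  define C where "C = (\<Sum>k. 1 / real (Suc k) ^ 2)"
  show ?thesis
  proof (rule tendsto_sandwich[of "\<lambda>_. 0" _ _ "\<lambda>n. ((ln (real n + 1) + 1) ^ 2 + C) / real n"])
    show "\<forall>\<^sub>F n in sequentially. 0 \<le> H2 (real n) / real n"
      using H2_mono[of 0] by (intro always_eventually allI divide_nonneg_nonneg) auto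
    have "H2 (real n) \<le> (ln (real n + 1) + 1) ^ 2 + C" for n
      unfolding H2_def C_def using H_le_ln[of "real n"] shifted_harm_2_le[of "real n"]
        shifted_harm_nonneg[of "real n" 1]
      by (intro add_mono power_mono) auto
    then show "\<forall>\<^sub>F n in sequentially. H2 (real n) / real n \<le> ((ln (real n + 1) + 1) ^ 2 + C) / real n"
      by (intro always_eventually allI divide_right_mono) auto
    show "(\<lambda>n. ((ln (real n + 1) + 1) ^ 2 + C) / real n) \<longlonglongrightarrow> 0"
      by real_asymp
  qed simp
qed

definition H2_series_term :: "real \<Rightarrow> nat \<Rightarrow> real" where
  "H2_series_term y m = H (y + real (Suc m)) * (1 / real (Suc m) - 1 / (y + real (Suc m)))"

lemma H2_series_term_mono:
  assumes "0 \<le> y" "y \<le> z" shows "H2_series_term y m \<le> H2_series_term z m"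
  unfolding H2_series_term_def
  using assms shifted_harm_mono[of "y + real (Suc m)" "z + real (Suc m)" 1]
    shifted_harm_nonneg[of "z + real (Suc m)" 1]
  by (intro mult_mono) (auto simp: frac_le)

lemma H2_series_term_step_sums:
  assumes "0 \<le> y"
  shows "(\<lambda>m. H2_series_term (y + 1) m - H2_series_term y m) sums (2 * H (y + 1) / (y + 1))"
proof -
  define a where "a m = H (y + real (Suc m)) / (y + real (Suc m))" for m
  have "a \<longlonglongrightarrow> 0"
    unfolding a_def using LIMSEQ_Suc[OF H_div_tendsto_0[OF assms]] by simp
  then have "(\<lambda>m. a m - a (Suc m)) sums (H (y + 1) / (y + 1))"
    using telescope_sums' by (fastforce simp: a_def add.commute)
  moreover have "(\<lambda>m. (1 / real (Suc m) - 1 / (real (Suc m) + (y + 1))) / (y + 1)) sums (H (y + 1) / (y + 1))"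
    using shifted_harm_sums[of "y + 1" 1] assms by (intro sums_divide) auto
  ultimately have "(\<lambda>m. (a m - a (Suc m)) + (1 / real (Suc m) - 1 / (real (Suc m) + (y + 1))) / (y + 1))
                     sums (2 * H (y + 1) / (y + 1))"
    using sums_add by fastforce
  moreover have "H2_series_term (y + 1) m - H2_series_term y m
      = (a m - a (Suc m)) + (1 / real (Suc m) - 1 / (real (Suc m) + (y + 1))) / (y + 1)" for m
  proof -
    define M where "M = real (Suc m)"
    define t where "t = y + M"
    have pos: "0 < M" "0 < t" using assms by (auto simp: M_def t_def)
    have a: "a m = H t / t" "a (Suc m) = H (t + 1) / (t + 1)" by (simp_all add: a_def t_def M_def add_ac)
    have "H2_series_term (y + 1) m - H2_series_term y m
          = (H (t + 1) - H t) / M + (H t / t - H (t + 1) / (t + 1))"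
      unfolding H2_series_term_def M_def[symmetric]
      by (simp add: t_def add_ac diff_divide_distrib right_diff_distrib)
    also have "H (t + 1) - H t = 1 / (t + 1)" using shifted_harm_plus_1[of t 1] pos by simp
    also have "1 / (t + 1) / M = (1 / M - 1 / (M + (y + 1))) / (y + 1)"
      using pos assms one_div_diff_one_div_add[of M "y + 1"] by (simp add: t_def add_ac)
    finally show ?thesis using a by (simp add: M_def)
  qed
  ultimately show ?thesis by simp
qed

lemma H2_series_sums: "0 \<le> y \<Longrightarrow> H2_series_term y sums H2 y"
  by (rule sums_by_difference_equation[where g = "\<lambda>t. 2 * H t / t"])
     (use H2_series_term_mono H2_series_term_step_sums H2_mono H2_plus_1
        tendsto_mult[OF tendsto_const[of 2] H_div_tendsto_0[of 0]]
      in \<open>auto simp: H2_series_term_def\<close>)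

definition H3_series_term :: "real \<Rightarrow> nat \<Rightarrow> real" where
  "H3_series_term x m = (H2 (x + real (Suc m)) - H2 (real (Suc m))) / real (Suc m)"

lemma H3_series_term_step_sums:
  assumes "0 \<le> x"
  shows "(\<lambda>m. H3_series_term (x + 1) m - H3_series_term x m) sums (2 * H2 (x + 1) / (x + 1))"
proof -
  have "H3_series_term (x + 1) m - H3_series_term x m = 2 / (x + 1) * H2_series_term (x + 1) m" for m
  proof -
    define M where "M = real (Suc m)"
    define t where "t = x + M"
    have pos: "0 < M" "0 < t" using assms by (auto simp: M_def t_def)
    have "H3_series_term (x + 1) m - H3_series_term x m = (H2 (t + 1) - H2 t) / M"
      unfolding H3_series_term_def M_def[symmetric] by (simp add: t_def add_ac diff_divide_distrib)
    also have "H2 (t + 1) - H2 t = 2 * H (t + 1) / (t + 1)" using H2_plus_1[of t] pos by simp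
    also have "2 * H (t + 1) / (t + 1) / M = 2 / (x + 1) * H2_series_term (x + 1) m"
      unfolding H2_series_term_def M_def[symmetric]
      using pos assms one_div_diff_one_div_add[of M "x + 1"] by (simp add: t_def add_ac)
    finally show ?thesis .
  qed
  moreover have "(\<lambda>m. 2 / (x + 1) * H2_series_term (x + 1) m) sums (2 / (x + 1) * H2 (x + 1))"
    using assms by (intro sums_mult H2_series_sums) auto
  ultimately show ?thesis by simp
qed

lemma H3_series_sums: "0 \<le> x \<Longrightarrow> H3_series_term x sums (2 / 3 * H3 x)"
  by (rule sums_by_difference_equation[where g = "\<lambda>t. 2 * H2 t / t"])
     (use H3_series_term_step_sums H2_mono H3_mono H3_plus_1
        tendsto_mult[OF tendsto_const[of 2] H2_div_tendsto_0]
      in \<open>auto simp: H3_series_term_def intro!: divide_right_mono\<close>)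

lemma sum_H2_div_shift:
  assumes "0 \<le> x"
  shows "(\<Sum>j=1..s. H2 (x + real j) / (x + real j)) = (H3 (x + real s) - H3 x) / 3"
proof (induction s)
  case (Suc s)
  have "H3 (x + real (Suc s)) = H3 (x + real s) + 3 * (H2 (x + real (Suc s)) / (x + real (Suc s)))"
    using H3_plus_1[of "x + real s"] assms by (simp add: add_ac)
  with Suc show ?case by simp
qed simp

lemma H2_shifted_series_sums:
  assumes "real s < \<alpha>"
  shows "(\<lambda>n. H2 (real (Suc n) + \<alpha>) / (real (Suc n) + real s) - H2 (real (Suc n)) / real (Suc n)) sums
           ((\<alpha> - real s) * (H3 (\<alpha> - real s) / (\<alpha> - real s)
              - (\<Sum>j=1..s. H2 (\<alpha> + real j - real s) / (real j * (\<alpha> + real j - real s))))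
            - H3 \<alpha> / 3)"
proof -
  define x where "x = \<alpha> - real s"
  define S where "S = (\<Sum>j=1..s. H2 (\<alpha> + real j - real s) / (real j * (\<alpha> + real j - real s)))"
  define u where "u m = H2 (real (Suc m)) / real (Suc m)" for m
  have "0 < x" using assms by (simp add: x_def)
  have "(\<lambda>n. H3_series_term x (n + s)) sums (2 / 3 * H3 x - (\<Sum>i<s. H3_series_term x i))"
    using H3_series_sums[of x] \<open>0 < x\<close> by (simp add: sums_iff_shift)
  moreover have "(\<lambda>n. u n - u (n + s)) sums (\<Sum>i<s. u i)"
    unfolding u_def using LIMSEQ_Suc[OF H2_div_tendsto_0] by (intro sums_diff_shift) simp
  ultimately have series: "(\<lambda>n. H3_series_term x (n + s) - (u n - u (n + s))) sums
                     (2 / 3 * H3 x - (\<Sum>i<s. H3_series_term x i) - (\<Sum>i<s. u i))"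
    by (rule sums_diff)
  have "H3_series_term x (n + s) - (u n - u (n + s))
      = H2 (real (Suc n) + \<alpha>) / (real (Suc n) + real s) - H2 (real (Suc n)) / real (Suc n)" for n
    unfolding H3_series_term_def u_def x_def by (simp add: diff_divide_distrib add_ac)
  moreover have "(\<Sum>i<s. H3_series_term x i) + (\<Sum>i<s. u i) = (\<Sum>j=1..s. H2 (x + real j) / real j)"
    unfolding H3_series_term_def u_def sum.distrib[symmetric]
    by (simp add: sum.atLeast1_atMost_eq diff_divide_distrib)
  moreover have "x * S = (\<Sum>j=1..s. H2 (x + real j) / real j) - (\<Sum>j=1..s. H2 (x + real j) / (x + real j))"
    unfolding S_def sum_distrib_left sum_subtractf[symmetric] using \<open>0 < x\<close>
    by (intro sum.cong) (auto simp: x_def field_simps)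
  moreover have "(\<Sum>j=1..s. H2 (x + real j) / (x + real j)) = (H3 \<alpha> - H3 x) / 3"
    using sum_H2_div_shift[of x s] \<open>0 < x\<close> by (simp add: x_def)
  moreover have "x * (H3 x / x - S) = H3 x - x * S" using \<open>0 < x\<close> by (simp add: right_diff_distrib)
  ultimately have "2 / 3 * H3 x - (\<Sum>i<s. H3_series_term x i) - (\<Sum>i<s. u i) = x * (H3 x / x - S) - H3 \<alpha> / 3"
    and "(\<lambda>n. H3_series_term x (n + s) - (u n - u (n + s)))
         = (\<lambda>n. H2 (real (Suc n) + \<alpha>) / (real (Suc n) + real s) - H2 (real (Suc n)) / real (Suc n))"
    by auto
  with series show ?thesis unfolding x_def S_def by simp
qed

theorem theorem2p6:
  fixes r k :: nat and \<alpha> :: real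
  assumes "real k < \<alpha>" and "r < k"
  shows "(\<lambda>n. (H (real (Suc n) + \<alpha>) ^ 2 + shifted_harm 2 (real (Suc n) + \<alpha>))
              / ((real (Suc n) + real r) * (real (Suc n) + real k)))
         sums
         ((real k - \<alpha>) / (real k - real r) *
            ((H (\<alpha> - real k) ^ 3 + 3 * H (\<alpha> - real k) * shifted_harm 2 (\<alpha> - real k)
                + 2 * shifted_harm 3 (\<alpha> - real k)) / (\<alpha> - real k)
             - (\<Sum>j=1..k. (H (\<alpha> + real j - real k) ^ 2 + shifted_harm 2 (\<alpha> + real j - real k))
                  / (real j * (\<alpha> + real j - real k))))
        + (\<alpha> - real r) / (real k - real r) *
            ((H (\<alpha> - real r) ^ 3 + 3 * H (\<alpha> - real r) * shifted_harm 2 (\<alpha> - real r)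
                + 2 * shifted_harm 3 (\<alpha> - real r)) / (\<alpha> - real r)
             - (\<Sum>j=1..r. (H (\<alpha> + real j - real r) ^ 2 + shifted_harm 2 (\<alpha> + real j - real r))
                  / (real j * (\<alpha> + real j - real r)))))"
proof -
  let ?T = "\<lambda>s n. H2 (real (Suc n) + \<alpha>) / (real (Suc n) + real s) - H2 (real (Suc n)) / real (Suc n)"
  let ?B = "\<lambda>s. H3 (\<alpha> - real s) / (\<alpha> - real s)
                  - (\<Sum>j=1..s. H2 (\<alpha> + real j - real s) / (real j * (\<alpha> + real j - real s)))"
  have "real r < \<alpha>" using assms by linarith
  from sums_divide[OF sums_diff[OF H2_shifted_series_sums[OF this] H2_shifted_series_sums[OF assms(1)]]]
  have "(\<lambda>n. (?T r n - ?T k n) / (real k - real r)) sums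
          (((\<alpha> - real r) * ?B r - H3 \<alpha> / 3 - ((\<alpha> - real k) * ?B k - H3 \<alpha> / 3)) / (real k - real r))" .
  moreover have "(?T r n - ?T k n) / (real k - real r)
      = H2 (real (Suc n) + \<alpha>) / ((real (Suc n) + real r) * (real (Suc n) + real k))" for n
    using partial_fraction_pair[of "real (Suc n) + real r" "real (Suc n) + real k"] assms by simp
  moreover have "((\<alpha> - real r) * ?B r - H3 \<alpha> / 3 - ((\<alpha> - real k) * ?B k - H3 \<alpha> / 3)) / (real k - real r)
      = (real k - \<alpha>) / (real k - real r) * ?B k + (\<alpha> - real r) / (real k - real r) * ?B r"
  proof -
    have "(a * B - c - (b * B' - c)) / K = (- b) / K * B' + a / K * B" for a b c B B' K :: real
      by (simp add: diff_divide_distrib)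
    from this[of "\<alpha> - real r" "?B r" "H3 \<alpha> / 3" "\<alpha> - real k" "?B k" "real k - real r"]
    show ?thesis by simp
  qed
  ultimately show ?thesis unfolding H2_def H3_def by simp
qed

end
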